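(* Let $N\ge1$. The closure of $\Phi_N$ in $\mathrm{PSL}_2(\hat{\mathbb{Z}}_{\mathrm{odd}})$ is $\mathrm{PSL}_2(\hat{\mathbb{Z}}_{\mathrm{odd}})$ if $3$ does not divide $N$, and is $\hat D_{\mathrm{odd}}$ if $3$ divides $N$.
   Context: $\bar\Gamma(2)=\Gamma(2)/\{\pm1\}\subset\mathrm{PSL}_2(\mathbb{Z})$, freely generated by the classes $A$ of $\begin{pmatrix}1&2\\0&1\end{pmatrix}$ and $B$ of $\begin{pmatrix}1&0\\2&1\end{pmatrix}$; $\Phi_N$ is the kernel of $\bar\Gamma(2)\to(\mathbb{Z}/N\mathbb{Z})^2$, $A\mapsto(1,0)$, $B\mapsto(0,1)$. Let $\hat{\mathbb{Z}}_{\mathrm{odd}}=\prod_{p\ne2}\mathbb{Z}_p$, with $\mathrm{PSL}_2(\mathbb{Z})\subset\mathrm{PSL}_2(\hat{\mathbb{Z}}_{\mathrm{odd}})$ and the profinite topology. $\hat D_{\mathrm{odd}}$ is the inverse image in $\mathrm{PSL}_2(\hat{\mathbb{Z}}_{\mathrm{odd}})$, under reduction mod $3$, of the Klein four-subgroup $D_3\subset\mathrm{PSL}_2(\mathbb{Z}/3\mathbb{Z})$ consisting of the classes of $\pm I$, $\pm\begin{pmatrix}0&-1\\1&0\end{pmatrix}$, $\pm\begin{pmatrix}-1&1\\1&1\end{pmatrix}$, $\pm\begin{pmatrix}1&1\\1&-1\end{pmatrix}$. *)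

theory Defs
  imports "HOL-Analysis.Analysis"
begin

text \<open>An element of \<open>\<Prod>_{p\<noteq>2} Z_p = lim_{m odd} Z/mZ\<close> is represented as a compatible
  family \<open>x :: nat \<Rightarrow> int\<close> with \<open>x m \<in> {0..<m}\<close> for odd \<open>m\<close> (its residue mod \<open>m\<close>),
  normalised to \<open>0\<close> at even indices.\<close>

type_synonym zo = "nat \<Rightarrow> int"

definition zodd :: "zo set" where
  "zodd = {x. (\<forall>m. (odd m \<longrightarrow> 0 \<le> x m \<and> x m < int m) \<and> (even m \<longrightarrow> x m = 0))
              \<and> (\<forall>m n. odd n \<and> m dvd n \<longrightarrow> x m = x n mod int m)}"

definition zint :: "int \<Rightarrow> zo" where
  "zint k = (\<lambda>m. if odd m then k mod int m else 0)"

definition zadd :: "zo \<Rightarrow> zo \<Rightarrow> zo" where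
  "zadd x y = (\<lambda>m. if odd m then (x m + y m) mod int m else 0)"

definition zsub :: "zo \<Rightarrow> zo \<Rightarrow> zo" where
  "zsub x y = (\<lambda>m. if odd m then (x m - y m) mod int m else 0)"

definition zmul :: "zo \<Rightarrow> zo \<Rightarrow> zo" where
  "zmul x y = (\<lambda>m. if odd m then (x m * y m) mod int m else 0)"

definition zneg :: "zo \<Rightarrow> zo" where
  "zneg x = zsub (zint 0) x"

definition zodd_top :: "zo topology" where
  "zodd_top = subtopology (product_topology (\<lambda>_. discrete_topology UNIV) UNIV) zodd"

text \<open>A 2x2 matrix (a b; c d) is the tuple (a,b,c,d).\<close>
type_synonym zmat = "zo \<times> zo \<times> zo \<times> zo"

definition SL2_odd :: "zmat set" where
  "SL2_odd = {(a,b,c,d). a \<in> zodd \<and> b \<in> zodd \<and> c \<in> zodd \<and> d \<in> zodd \<and>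
                         zsub (zmul a d) (zmul b c) = zint 1}"

definition mneg :: "zmat \<Rightarrow> zmat" where
  "mneg M = (case M of (a,b,c,d) \<Rightarrow> (zneg a, zneg b, zneg c, zneg d))"

definition pcls :: "zmat \<Rightarrow> zmat set" where
  "pcls M = {M, mneg M}"

definition PSL2_odd :: "zmat set set" where
  "PSL2_odd = pcls ` SL2_odd"

definition SL2_top :: "zmat topology" where
  "SL2_top = subtopology
     (prod_topology zodd_top (prod_topology zodd_top (prod_topology zodd_top zodd_top))) SL2_odd"

definition PSL2_top :: "zmat set topology" where
  "PSL2_top = topology (\<lambda>U. U \<subseteq> PSL2_odd \<and> openin SL2_top {M \<in> SL2_odd. pcls M \<in> U})"

type_synonym imat = "int \<times> int \<times> int \<times> int"

definition imul :: "imat \<Rightarrow> imat \<Rightarrow> imat" where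
  "imul M N = (case M of (a,b,c,d) \<Rightarrow> case N of (e,f,g,h) \<Rightarrow>
                 (a*e + b*g, a*f + b*h, c*e + d*g, c*f + d*h))"

definition ineg :: "imat \<Rightarrow> imat" where
  "ineg M = (case M of (a,b,c,d) \<Rightarrow> (-a, -b, -c, -d))"

definition ipcls :: "imat \<Rightarrow> imat set" where
  "ipcls M = {M, ineg M}"

text \<open>Letters: (True, s) is A^{\<plusminus>1}, (False, s) is B^{\<plusminus>1}; s = True means exponent +1.\<close>
definition gen :: "bool \<times> bool \<Rightarrow> imat" where
  "gen l = (case l of
      (True, True) \<Rightarrow> (1, 2, 0, 1)
    | (True, False) \<Rightarrow> (1, -2, 0, 1)
    | (False, True) \<Rightarrow> (1, 0, 2, 1)
    | (False, False) \<Rightarrow> (1, 0, -2, 1))"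

definition eval_word :: "(bool \<times> bool) list \<Rightarrow> imat" where
  "eval_word ws = foldr (\<lambda>l M. imul (gen l) M) ws (1, 0, 0, 1)"

definition expA :: "(bool \<times> bool) list \<Rightarrow> int" where
  "expA ws = sum_list (map (\<lambda>(isA, pos). if isA then (if pos then 1 else -1) else 0) ws)"

definition expB :: "(bool \<times> bool) list \<Rightarrow> int" where
  "expB ws = sum_list (map (\<lambda>(isA, pos). if isA then 0 else (if pos then 1 else -1)) ws)"

definition Gamma2bar :: "imat set set" where
  "Gamma2bar = {ipcls (eval_word ws) | ws. True}"

text \<open>Phi_N = kernel of Gamma(2)-bar \<rightarrow> (Z/N)^2, A \<mapsto> (1,0), B \<mapsto> (0,1); since Gamma(2)-bar is free
  on A, B, this map sends the class of a word to its pair of exponent sums mod N.\<close>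
definition Phi :: "nat \<Rightarrow> imat set set" where
  "Phi N = {ipcls (eval_word ws) | ws. int N dvd expA ws \<and> int N dvd expB ws}"

definition emb :: "imat \<Rightarrow> zmat" where
  "emb M = (case M of (a,b,c,d) \<Rightarrow> (zint a, zint b, zint c, zint d))"

definition psl_embed :: "imat set \<Rightarrow> zmat set" where
  "psl_embed C = emb ` C"

text \<open>D_3 \<subseteq> PSL2(Z/3), listed by representatives with entries in {0,1,2} (both signs).\<close>
definition D3 :: "imat set" where
  "D3 = {(1,0,0,1), (2,0,0,2),
         (0,2,1,0), (0,1,2,0),
         (2,1,1,1), (1,2,2,2),
         (1,1,1,2), (2,2,2,1)}"

definition red3 :: "zmat \<Rightarrow> imat" where
  "red3 M = (case M of (a,b,c,d) \<Rightarrow> (a 3, b 3, c 3, d 3))"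

definition Dhat_odd :: "zmat set set" where
  "Dhat_odd = {P \<in> PSL2_odd. \<exists>M \<in> P. red3 M \<in> D3}"

end

theory Submission
  imports Defs "HOL-Number_Theory.Cong"
begin

(* The closure is computed level by level: a class lies in the closure of Phi_N iff for every
   odd n one of its representatives is congruent mod n to an element of Phi_N.
   Modulo odd m the generators of Gamma(2) give all unipotents u(x), l(x), since 2 is a unit,
   hence all of SL2(Z/m): products of unipotents give the diagonal matrices, and a lower
   unipotent times a diagonal times an upper unipotent reaches every matrix whose top-left
   entry is a unit, which can be arranged by a unipotent shift.
   Phi_N is normal in Gamma(2) with abelian quotient, so it contains u(Nx), l(Nx) and all
   commutators; commutators with diag(2, 1/2) give u(3x), l(3x).  If 3 does not divide N
   these yield all unipotents, hence everything.  If 3 divides N, the image of a word in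
   PSL2(Z/3) = A4 lies in the coset of the Klein group D3 indexed by its exponent sums
   expA - expB mod 3, so Phi_N reduces into D3; conversely, modulo any m divisible by 3, Phi_N
   contains every matrix congruent to 1 mod 3 (via Whitehead products of unipotents with
   entries divisible by 3), together with words of vanishing exponent sums representing each
   element of D3. *)

section \<open>Integer matrices modulo m\<close>

definition ione :: imat where "ione = (1, 0, 0, 1)"
definition iadj :: "imat \<Rightarrow> imat" where "iadj M = (case M of (a,b,c,d) \<Rightarrow> (d, -b, -c, a))"
definition idet :: "imat \<Rightarrow> int" where "idet M = (case M of (a,b,c,d) \<Rightarrow> a*d - b*c)"
definition upper :: "int \<Rightarrow> imat" where "upper x = (1, x, 0, 1)"
definition lower :: "int \<Rightarrow> imat" where "lower x = (1, 0, x, 1)"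
definition diag :: "int \<Rightarrow> int \<Rightarrow> imat" where "diag a d = (a, 0, 0, d)"

lemma imul_assoc: "imul (imul X Y) Z = imul X (imul Y Z)"
  by (cases X; cases Y; cases Z) (simp add: imul_def algebra_simps)

lemma imul_ione [simp]: "imul ione X = X" "imul X ione = X"
  by (cases X, simp add: imul_def ione_def)+

lemma iadj_imul: "iadj (imul X Y) = imul (iadj Y) (iadj X)"
  by (cases X; cases Y) (simp add: imul_def iadj_def algebra_simps)

lemma iadj_ione [simp]: "iadj ione = ione"
  by (simp add: iadj_def ione_def)

lemma idet_imul: "idet (imul X Y) = idet X * idet Y"
  by (cases X; cases Y) (simp add: imul_def idet_def algebra_simps)

lemma idet_iadj [simp]: "idet (iadj X) = idet X"
  by (cases X) (simp add: iadj_def idet_def algebra_simps)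

lemma imul_iadj_cancel: "idet X = 1 \<Longrightarrow> imul (iadj X) X = ione"
  by (cases X) (simp add: imul_def iadj_def idet_def ione_def algebra_simps)

lemma upper_add: "imul (upper x) (upper y) = upper (x + y)"
  by (simp add: imul_def upper_def)

lemma lower_add: "imul (lower x) (lower y) = lower (x + y)"
  by (simp add: imul_def lower_def)

definition mat_cong :: "int \<Rightarrow> imat \<Rightarrow> imat \<Rightarrow> bool" where
  "mat_cong m X Y \<longleftrightarrow> (case X of (a,b,c,d) \<Rightarrow> case Y of (a',b',c',d') \<Rightarrow>
     [a = a'] (mod m) \<and> [b = b'] (mod m) \<and> [c = c'] (mod m) \<and> [d = d'] (mod m))"

lemma mat_cong_refl [simp]: "mat_cong m X X"
  by (cases X) (simp add: mat_cong_def)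

lemma mat_cong_trans: "mat_cong m X Y \<Longrightarrow> mat_cong m Y Z \<Longrightarrow> mat_cong m X Z"
  by (cases X; cases Y; cases Z) (auto simp: mat_cong_def elim: cong_trans)

lemma mat_cong_imul: "mat_cong m X X' \<Longrightarrow> mat_cong m Y Y' \<Longrightarrow> mat_cong m (imul X Y) (imul X' Y')"
  by (cases X; cases X'; cases Y; cases Y') (simp add: mat_cong_def imul_def cong_add cong_mult)

lemma mat_cong_iadj: "mat_cong m X Y \<Longrightarrow> mat_cong m (iadj X) (iadj Y)"
  by (cases X; cases Y) (simp add: mat_cong_def iadj_def cong_minus_minus_iff)

lemma mat_cong_dvd: "mat_cong m X Y \<Longrightarrow> k dvd m \<Longrightarrow> mat_cong k X Y"
  by (cases X; cases Y) (auto simp: mat_cong_def intro: cong_dvd_modulus)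

definition imod :: "int \<Rightarrow> imat \<Rightarrow> imat" where
  "imod m X = (case X of (a,b,c,d) \<Rightarrow> (a mod m, b mod m, c mod m, d mod m))"

lemma mat_cong_iff_imod: "mat_cong m X Y \<longleftrightarrow> imod m X = imod m Y"
  by (cases X; cases Y) (simp add: mat_cong_def imod_def cong_def)

lemma mat_cong_imod: "mat_cong m X (imod m X)"
  by (cases X) (simp add: mat_cong_def imod_def cong_def)

lemma imod_imul: "imod m (imul X Y) = imod m (imul (imod m X) (imod m Y))"
  using mat_cong_imul[OF mat_cong_imod mat_cong_imod] by (simp add: mat_cong_iff_imod)

lemma imod_imod [simp]: "imod m (imod m X) = imod m X"
  by (cases X) (simp add: imod_def)

lemma imod_ineg: "imod m (ineg X) = imod m (ineg (imod m X))"
  by (cases X) (simp add: imod_def ineg_def mod_simps)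

section \<open>Words in the generators\<close>

lemma eval_word_Nil [simp]: "eval_word [] = ione"
  by (simp add: eval_word_def ione_def)

lemma eval_word_Cons [simp]: "eval_word (l # ws) = imul (gen l) (eval_word ws)"
  by (simp add: eval_word_def)

lemma eval_word_append: "eval_word (ws @ vs) = imul (eval_word ws) (eval_word vs)"
  by (induction ws) (simp_all add: imul_assoc)

lemma idet_gen: "idet (gen l) = 1"
  by (cases l) (simp add: gen_def idet_def split: bool.splits)

lemma gen_flip_sign: "gen (isA, \<not> pos) = iadj (gen (isA, pos))"
  by (simp add: gen_def iadj_def split: bool.splits)

lemma idet_eval_word: "idet (eval_word ws) = 1"
  by (induction ws) (simp_all add: idet_imul idet_gen, simp add: idet_def ione_def)

lemma exp_Nil [simp]: "expA [] = 0" "expB [] = 0"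
  by (simp_all add: expA_def expB_def)

lemma exp_Cons [simp]:
  "expA ((isA, pos) # ws) = (if isA then (if pos then 1 else -1) else 0) + expA ws"
  "expB ((isA, pos) # ws) = (if isA then 0 else (if pos then 1 else -1)) + expB ws"
  by (simp_all add: expA_def expB_def)

lemma exp_append [simp]: "expA (ws @ vs) = expA ws + expA vs" "expB (ws @ vs) = expB ws + expB vs"
  by (simp_all add: expA_def expB_def)

definition word_inv :: "(bool \<times> bool) list \<Rightarrow> (bool \<times> bool) list" where
  "word_inv ws = rev (map (\<lambda>(isA, pos). (isA, \<not> pos)) ws)"

lemma eval_word_inv: "eval_word (word_inv ws) = iadj (eval_word ws)"
  by (induction ws) (auto simp: word_inv_def eval_word_append iadj_imul gen_flip_sign)

lemma exp_word_inv [simp]: "expA (word_inv ws) = - expA ws" "expB (word_inv ws) = - expB ws"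
  by (induction ws) (auto simp: word_inv_def)

definition A_pow :: "int \<Rightarrow> (bool \<times> bool) list" where
  "A_pow k = replicate (nat \<bar>k\<bar>) (True, 0 \<le> k)"

definition B_pow :: "int \<Rightarrow> (bool \<times> bool) list" where
  "B_pow k = replicate (nat \<bar>k\<bar>) (False, 0 \<le> k)"

lemma eval_word_replicate:
  "eval_word (replicate n (True, s)) = upper (if s then 2 * int n else - 2 * int n)"
  "eval_word (replicate n (False, s)) = lower (if s then 2 * int n else - 2 * int n)"
  by (induction n) (auto simp: upper_def lower_def ione_def gen_def imul_def)

lemma exp_replicate:
  "expA (replicate n (True, s)) = (if s then int n else - int n)" "expB (replicate n (True, s)) = 0"
  "expA (replicate n (False, s)) = 0" "expB (replicate n (False, s)) = (if s then int n else - int n)"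
  by (induction n) auto

lemma eval_word_A_pow: "eval_word (A_pow k) = upper (2 * k)"
  and eval_word_B_pow: "eval_word (B_pow k) = lower (2 * k)"
  by (simp_all add: A_pow_def B_pow_def eval_word_replicate)

lemma exp_A_pow [simp]: "expA (A_pow k) = k" "expB (A_pow k) = 0"
  and exp_B_pow [simp]: "expA (B_pow k) = 0" "expB (B_pow k) = k"
  by (simp_all add: A_pow_def B_pow_def exp_replicate)

section \<open>Images of \<open>\<Phi>\<^sub>N\<close> modulo odd m\<close>

text \<open>For \<open>N = 1\<close> every word qualifies, so \<open>Phi_mod 1 m\<close> describes the image of \<open>\<Gamma>(2)\<close>.\<close>

definition Phi_mod :: "nat \<Rightarrow> int \<Rightarrow> imat \<Rightarrow> bool" where
  "Phi_mod N m T \<longleftrightarrow>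
     (\<exists>ws. int N dvd expA ws \<and> int N dvd expB ws \<and> mat_cong m (eval_word ws) T)"

lemma Phi_mod_cong: "Phi_mod N m X \<Longrightarrow> mat_cong m X Y \<Longrightarrow> Phi_mod N m Y"
  unfolding Phi_mod_def using mat_cong_trans by blast

lemma Phi_mod_imul: "Phi_mod N m X \<Longrightarrow> Phi_mod N m Y \<Longrightarrow> Phi_mod N m (imul X Y)"
  unfolding Phi_mod_def by (metis eval_word_append mat_cong_imul exp_append dvd_add)

lemma Phi_mod_dvd: "Phi_mod N m X \<Longrightarrow> k dvd m \<Longrightarrow> Phi_mod N k X"
  unfolding Phi_mod_def using mat_cong_dvd by blast

lemma Phi_mod_zero_exponents:
  "expA ws = 0 \<Longrightarrow> expB ws = 0 \<Longrightarrow> Phi_mod N m (eval_word ws)"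
  unfolding Phi_mod_def by (auto intro: exI[of _ ws])

lemma Phi_mod_upper_lower:
  assumes "odd m"
  shows "Phi_mod N m (upper (int N * x))" "Phi_mod N m (lower (int N * x))"
proof -
  define k where "k = int N * x * ((m + 1) div 2)"
  have "2 * ((m + 1) div 2) = m + 1" using assms by presburger
  then have "2 * k - int N * x = m * (int N * x)" by (simp add: k_def algebra_simps)
  then have "[2 * k = int N * x] (mod m)" by (metis cong_iff_dvd_diff dvd_triv_left)
  then have "mat_cong m (eval_word (A_pow k)) (upper (int N * x))"
            "mat_cong m (eval_word (B_pow k)) (lower (int N * x))"
    by (simp_all add: eval_word_A_pow eval_word_B_pow upper_def lower_def mat_cong_def)
  moreover have "int N dvd k" by (simp add: k_def)
  ultimately show "Phi_mod N m (upper (int N * x))" "Phi_mod N m (lower (int N * x))"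
    unfolding Phi_mod_def by (auto intro: exI[of _ "A_pow k"] exI[of _ "B_pow k"])
qed

lemma Phi_mod_conj:
  assumes "Phi_mod 1 m T" "Phi_mod N m Q"
  shows "Phi_mod N m (imul (imul T Q) (iadj T))"
proof -
  obtain ws where ws: "mat_cong m (eval_word ws) T" using assms(1) Phi_mod_def by blast
  obtain vs where vs: "int N dvd expA vs" "int N dvd expB vs" "mat_cong m (eval_word vs) Q"
    using assms(2) Phi_mod_def by blast
  have "mat_cong m (eval_word (ws @ vs @ word_inv ws)) (imul (imul T Q) (iadj T))"
    using mat_cong_imul[OF mat_cong_imul[OF ws vs(3)] mat_cong_iadj[OF ws]]
    by (simp add: eval_word_append eval_word_inv imul_assoc)
  then show ?thesis using vs unfolding Phi_mod_def by (intro exI[of _ "ws @ vs @ word_inv ws"]) simp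
qed

lemma Phi_mod_commutator:
  assumes "Phi_mod 1 m T" "Phi_mod 1 m S"
  shows "Phi_mod N m (imul (imul (imul T S) (iadj T)) (iadj S))"
proof -
  obtain ws where ws: "mat_cong m (eval_word ws) T" using assms(1) Phi_mod_def by blast
  obtain vs where vs: "mat_cong m (eval_word vs) S" using assms(2) Phi_mod_def by blast
  have "mat_cong m (eval_word (ws @ vs @ word_inv ws @ word_inv vs)) (imul (imul (imul T S) (iadj T)) (iadj S))"
    using mat_cong_imul[OF mat_cong_imul[OF mat_cong_imul[OF ws vs] mat_cong_iadj[OF ws]] mat_cong_iadj[OF vs]]
    by (simp add: eval_word_append eval_word_inv imul_assoc)
  then show ?thesis unfolding Phi_mod_def by (intro exI[of _ "ws @ vs @ word_inv ws @ word_inv vs"]) simp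
qed

lemma coprime_shift:
  fixes a c d m :: int
  assumes "m \<noteq> 0" and "coprime a d" and "coprime (gcd a c) m"
  shows "\<exists>t. d dvd t \<and> coprime (a + t * c) m"
proof -
  define Q where "Q = \<Prod>{p \<in> prime_factors m. \<not> p dvd a}"
  have fin: "finite {p \<in> prime_factors m. \<not> p dvd a}" by simp
  have no_prime: "\<not> p dvd a + d * Q * c" if p: "prime p" "p dvd m" for p
  proof (cases "p dvd a")
    case True
    have "\<not> p dvd c" using True p assms(3) by (meson coprime_common_divisor gcd_greatest not_prime_unit)
    moreover have "\<not> p dvd d" using True p assms(2) by (meson coprime_common_divisor not_prime_unit)
    moreover have "\<not> p dvd Q"
    proof
      assume "p dvd Q"
      then obtain q where "q \<in> prime_factors m" "\<not> q dvd a" "p dvd q"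
        using prime_dvd_prod_iff[OF fin p(1)] by (auto simp: Q_def)
      then show False using True p(1) by (metis in_prime_factors_imp_prime primes_dvd_imp_eq)
    qed
    ultimately show ?thesis using True p by (simp add: dvd_add_right_iff prime_dvd_mult_iff)
  next
    case False
    then have "p dvd Q" using p assms(1) unfolding Q_def
      by (intro dvd_prodI[OF fin, of p id, simplified]) (simp add: in_prime_factors_iff)
    then show ?thesis using False by (simp add: dvd_add_left_iff)
  qed
  have "coprime (a + d * Q * c) m"
  proof (rule coprimeI)
    fix k assume k: "k dvd a + d * Q * c" "k dvd m"
    show "is_unit k"
    proof (rule ccontr)
      assume "\<not> is_unit k"
      moreover have "k \<noteq> 0" using k(2) assms(1) by auto
      ultimately obtain p where "p dvd k" "prime p" using prime_divisor_exists by blast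
      then show False using no_prime k by (meson dvd_trans)
    qed
  qed
  then show ?thesis by (intro exI[of _ "d * Q"]) simp
qed

lemma mat_cong_lower_diag_upper:
  assumes "[a * \<alpha> = 1] (mod m)" "[a * e - b * c = 1] (mod m)"
  shows "mat_cong m (imul (lower (c * \<alpha>)) (imul (diag a \<alpha>) (upper (\<alpha> * b)))) (a, b, c, e)"
proof -
  obtain k where k: "a * \<alpha> = 1 + m * k"
    using assms(1) by (metis cong_iff_dvd_diff dvd_def add.commute diff_eq_eq)
  obtain j where j: "a * e - b * c = 1 + m * j"
    using assms(2) by (metis cong_iff_dvd_diff dvd_def add.commute diff_eq_eq)
  have "a * (\<alpha> * b) - b = m * (k * b)" "c * \<alpha> * a - c = m * (k * c)"
    "c * \<alpha> * (a * (\<alpha> * b)) + \<alpha> - e = m * (k * e - \<alpha> * j + c * \<alpha> * b * k)"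
    using k j by algebra+
  then show ?thesis
    by (simp add: mat_cong_def imul_def lower_def diag_def upper_def cong_iff_dvd_diff)
qed

lemma Phi_mod_level:
  fixes d m :: int
  assumes "m \<noteq> 0"
    and upper: "\<And>x. Phi_mod N m (upper (d * x))" and lower: "\<And>x. Phi_mod N m (lower (d * x))"
    and diag: "\<And>a \<alpha>. [a = 1] (mod d) \<Longrightarrow> [a * \<alpha> = 1] (mod m) \<Longrightarrow> Phi_mod N m (diag a \<alpha>)"
    and T: "mat_cong d T ione" "[idet T = 1] (mod m)"
  shows "Phi_mod N m T"
proof -
  obtain a b c e where T_eq: "T = (a, b, c, e)" by (cases T)
  have a: "[a = 1] (mod d)" and "d dvd b" "d dvd c" and det: "[a * e - b * c = 1] (mod m)"
    using T by (simp_all add: T_eq mat_cong_def ione_def idet_def cong_0_iff)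
  have upper': "Phi_mod N m (upper y)" and lower': "Phi_mod N m (lower y)" if "d dvd y" for y
    using that upper lower by (metis dvd_def)+
  have "coprime a d" using cong_imp_coprime[OF cong_sym[OF a]] by simp
  moreover have "coprime (gcd a c) m"
  proof -
    have "gcd a c dvd a * e - b * c"
      by (meson dvd_diff dvd_mult dvd_mult2 gcd_dvd1 gcd_dvd2)
    moreover have "coprime (a * e - b * c) m"
      using cong_imp_coprime[OF cong_sym[OF det]] by simp
    ultimately show ?thesis by (rule coprime_divisors[OF _ dvd_refl])
  qed
  ultimately obtain t where t: "d dvd t" "coprime (a + t * c) m"
    using coprime_shift[OF \<open>m \<noteq> 0\<close>] by blast
  define a' b' where "a' = a + t * c" and "b' = b + t * e"
  obtain \<alpha> where \<alpha>: "[a' * \<alpha> = 1] (mod m)"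
    using cong_solve_coprime_int t(2) unfolding a'_def by blast
  have "[a' * e - b' * c = 1] (mod m)"
    using det by (simp add: a'_def b'_def algebra_simps)
  then have "mat_cong m (imul (lower (c * \<alpha>)) (imul (diag a' \<alpha>) (upper (\<alpha> * b')))) (a', b', c, e)"
    using mat_cong_lower_diag_upper[OF \<alpha>] by blast
  moreover have "Phi_mod N m (imul (lower (c * \<alpha>)) (imul (diag a' \<alpha>) (upper (\<alpha> * b'))))"
  proof (intro Phi_mod_imul lower' diag upper')
    show "[a' = 1] (mod d)" using cong_add[OF a, of "t * c" 0] t(1) by (simp add: a'_def cong_0_iff)
    show "d dvd \<alpha> * b'" using \<open>d dvd b\<close> t(1) by (simp add: b'_def)
  qed (use \<alpha> \<open>d dvd c\<close> in simp_all)
  ultimately have "Phi_mod N m (a', b', c, e)" by (rule Phi_mod_cong[rotated])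
  moreover have "T = imul (upper (- t)) (a', b', c, e)"
    by (simp add: T_eq imul_def upper_def a'_def b'_def)
  ultimately show ?thesis using Phi_mod_imul[OF upper'[OF dvd_minus_iff[THEN iffD2, OF t(1)]]] by simp
qed

text \<open>If \<open>a\<alpha> = 1\<close> then \<open>u(a) l(-\<alpha>) u(a)\<close> is the antidiagonal matrix \<open>(0, a; -\<alpha>, 0)\<close>, and
  multiplying by the one for \<open>a = -1\<close> gives \<open>diag a \<alpha>\<close>.\<close>

definition whitehead_diag :: "int \<Rightarrow> int \<Rightarrow> imat" where
  "whitehead_diag a \<alpha> =
     imul (imul (upper a) (imul (lower (- \<alpha>)) (upper a))) (imul (upper (-1)) (imul (lower 1) (upper (-1))))"

lemma whitehead_diag_eq: "whitehead_diag a \<alpha> = (a * (2 - a * \<alpha>), a * \<alpha> - 1, 1 - a * \<alpha>, \<alpha>)"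
  by (simp add: whitehead_diag_def imul_def upper_def lower_def algebra_simps)

lemma whitehead_diag_cong:
  assumes "[a * \<alpha> = 1] (mod m)"
  shows "mat_cong m (whitehead_diag a \<alpha>) (diag a \<alpha>)"
proof -
  have h: "m dvd a * \<alpha> - 1" using assms by (simp add: cong_iff_dvd_diff)
  moreover have "m dvd 1 - a * \<alpha>" using h by (metis dvd_minus_iff minus_diff_eq)
  moreover have "m dvd (- a) * (a * \<alpha> - 1)" using h by simp
  ultimately show ?thesis
    by (simp add: whitehead_diag_eq diag_def mat_cong_def cong_iff_dvd_diff algebra_simps)
qed

lemma Phi_mod_if_unipotents:
  assumes "m \<noteq> 0" "\<And>x. Phi_mod N m (upper x)" "\<And>x. Phi_mod N m (lower x)" "[idet T = 1] (mod m)"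
  shows "Phi_mod N m T"
proof (rule Phi_mod_level[where d = 1])
  fix a \<alpha> :: int assume "[a * \<alpha> = 1] (mod m)"
  moreover have "Phi_mod N m (whitehead_diag a \<alpha>)"
    unfolding whitehead_diag_def using assms(2,3) by (intro Phi_mod_imul)
  ultimately show "Phi_mod N m (diag a \<alpha>)" using Phi_mod_cong whitehead_diag_cong by blast
qed (use assms in \<open>simp_all add: mat_cong_def\<close>)

lemma Gamma2_mod_surj:
  assumes "odd m" "[idet T = 1] (mod m)"
  shows "Phi_mod 1 m T"
proof (rule Phi_mod_if_unipotents)
  show "Phi_mod 1 m (upper x)" "Phi_mod 1 m (lower x)" for x
    using Phi_mod_upper_lower[OF assms(1), of 1 x] by simp_all
qed (use assms in auto)

text \<open>Conjugation by \<open>diag 2 (1/2)\<close> multiplies the upper entry by 4, so the commutator with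
  \<open>u(x)\<close> is \<open>u(3x)\<close>.\<close>

lemma Phi_mod_upper_lower_3:
  assumes "odd m"
  shows "Phi_mod N m (upper (3 * x))" "Phi_mod N m (lower (3 * x))"
proof -
  define \<beta> where "\<beta> = (m + 1) div 2"
  have \<beta>: "2 * \<beta> = m + 1" using assms unfolding \<beta>_def by presburger
  have "[2 * \<beta> = 1] (mod m)" unfolding \<beta> by (simp add: cong_iff_dvd_diff)
  then have "Phi_mod 1 m (diag 2 \<beta>)" "Phi_mod 1 m (diag \<beta> 2)" "Phi_mod 1 m (upper x)" "Phi_mod 1 m (lower x)"
    by (intro Gamma2_mod_surj assms; simp add: idet_def diag_def upper_def lower_def mult.commute)+
  then have "Phi_mod N m (imul (imul (imul (diag 2 \<beta>) (upper x)) (iadj (diag 2 \<beta>))) (iadj (upper x)))"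
            "Phi_mod N m (imul (imul (imul (diag \<beta> 2) (lower x)) (iadj (diag \<beta> 2))) (iadj (lower x)))"
    by (simp_all add: Phi_mod_commutator)
  moreover
  have "imul (imul (imul (diag 2 \<beta>) (upper x)) (iadj (diag 2 \<beta>))) (iadj (upper x))
          = (2 * \<beta>, 4 * x - 2 * \<beta> * x, 0, 2 * \<beta>)"
       "imul (imul (imul (diag \<beta> 2) (lower x)) (iadj (diag \<beta> 2))) (iadj (lower x))
          = (2 * \<beta>, 0, 4 * x - 2 * \<beta> * x, 2 * \<beta>)"
    by (simp_all add: imul_def diag_def upper_def lower_def iadj_def algebra_simps)
  moreover
  have "mat_cong m (2 * \<beta>, 4 * x - 2 * \<beta> * x, 0, 2 * \<beta>) (upper (3 * x))"
       "mat_cong m (2 * \<beta>, 0, 4 * x - 2 * \<beta> * x, 2 * \<beta>) (lower (3 * x))"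
    unfolding \<beta> upper_def lower_def mat_cong_def by (simp_all add: cong_iff_dvd_diff algebra_simps)
  ultimately show "Phi_mod N m (upper (3 * x))" "Phi_mod N m (lower (3 * x))"
    using Phi_mod_cong by metis+
qed

lemma Phi_mod_not_3_dvd:
  assumes "odd m" "\<not> 3 dvd N" "[idet T = 1] (mod m)"
  shows "Phi_mod N m T"
proof (rule Phi_mod_if_unipotents)
  have "coprime (3::int) (int N)"
    using assms(2) by (intro prime_imp_coprime) (simp add: prime_int_numeral_eq, presburger)
  then obtain u v where uv: "u * 3 + v * int N = 1" using bezout_int[of 3 "int N"] by auto
  fix x
  have "3 * (u * x) + int N * (v * x) = x" using uv by algebra
  then have "upper x = imul (upper (3 * (u * x))) (upper (int N * (v * x)))"
       "lower x = imul (lower (3 * (u * x))) (lower (int N * (v * x)))"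
    by (simp_all only: upper_add lower_add)
  then show "Phi_mod N m (upper x)" "Phi_mod N m (lower x)"
    using Phi_mod_imul Phi_mod_upper_lower_3[OF assms(1)] Phi_mod_upper_lower[OF assms(1)] by simp_all
qed (use assms in auto)

lemma Phi_mod_diag_level_3:
  assumes "odd m" "3 dvd m" "[a = 1] (mod 3)" "[a * \<alpha> = 1] (mod m)"
  shows "Phi_mod N m (diag a \<alpha>)"
proof -
  obtain s where s: "a = 1 + 3 * s" using cong_sym[OF assms(3)] by (auto simp: cong_iff_lin)
  have "[a * \<alpha> = 1] (mod 3)" using assms(2,4) by (rule cong_dvd_modulus[rotated])
  moreover have "[\<alpha> = a * \<alpha>] (mod 3)" using cong_mult[OF cong_sym[OF assms(3)] cong_refl[of \<alpha>]] by simp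
  ultimately have "[\<alpha> = 1] (mod 3)" using cong_trans by blast
  then obtain r where r: "\<alpha> = 1 + 3 * r" by (metis cong_iff_lin cong_sym)
  txt \<open>With \<open>a = 1 + 3s\<close>, \<open>\<alpha> = 1 + 3r\<close> the Whitehead product is exactly
    \<open>u(3s) \<cdot> u(1) l(-3r) u(1)\<^sup>-\<^sup>1 \<cdot> l(-3s)\<close>.\<close>
  have "Phi_mod 1 m (upper 1)" using Phi_mod_upper_lower(1)[OF assms(1), of 1 1] by simp
  then have "Phi_mod N m
    (imul (upper (3 * s)) (imul (imul (imul (upper 1) (lower (3 * - r))) (iadj (upper 1))) (lower (3 * - s))))"
    by (intro Phi_mod_imul Phi_mod_conj Phi_mod_upper_lower_3[OF assms(1)])
  moreover have "imul (upper (3 * s)) (imul (imul (imul (upper 1) (lower (3 * - r))) (iadj (upper 1))) (lower (3 * - s)))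
    = whitehead_diag a \<alpha>"
    unfolding s r by (simp add: whitehead_diag_eq imul_def upper_def lower_def iadj_def algebra_simps)
  ultimately have "Phi_mod N m (whitehead_diag a \<alpha>)" by simp
  then show ?thesis using whitehead_diag_cong[OF assms(4)] by (rule Phi_mod_cong)
qed

lemma Phi_mod_level_3:
  assumes "odd m" "3 dvd m" "mat_cong 3 T ione" "[idet T = 1] (mod m)"
  shows "Phi_mod N m T"
proof (rule Phi_mod_level[where d = 3])
  show "m \<noteq> 0" using assms(1) by auto
qed (use assms Phi_mod_upper_lower_3 Phi_mod_diag_level_3 in auto)

section \<open>Reduction modulo 3\<close>

text \<open>The cosets of the Klein four-group \<open>D\<^sub>3\<close> in \<open>PSL\<^sub>2(\<int>/3) \<cong> A\<^sub>4\<close>, as sets of residue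
  matrices of both signs.\<close>

definition D3_coset :: "int \<Rightarrow> imat set" where
  "D3_coset j = (if j = 0 then D3 else if j = 1 then
     {(0, 1, 2, 1), (0, 2, 1, 2), (1, 0, 1, 1), (1, 1, 2, 0), (1, 2, 0, 1), (2, 0, 2, 2), (2, 1, 0, 2), (2, 2, 1, 0)}
   else {(0, 1, 2, 2), (0, 2, 1, 1), (1, 0, 2, 1), (1, 1, 0, 1), (1, 2, 1, 0), (2, 0, 1, 2), (2, 1, 2, 0), (2, 2, 0, 2)})"

lemma imod_3_gen_D3_coset:
  assumes "j \<in> {0, 1, 2}" "X \<in> D3_coset j"
  shows "imod 3 (imul (gen l) X) \<in> D3_coset ((j + expA [l] - expB [l]) mod 3)"
proof -
  have "\<forall>j \<in> {0, 1, 2}. \<forall>X \<in> D3_coset j. \<forall>isA pos.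
     imod 3 (imul (gen (isA, pos)) X) \<in> D3_coset ((j + expA [(isA, pos)] - expB [(isA, pos)]) mod 3)"
    unfolding D3_coset_def D3_def by (simp add: gen_def imul_def imod_def all_bool_eq)
  from bspec[OF bspec[OF this assms(1)] assms(2)] show ?thesis by (cases l) simp
qed

lemma imod_3_eval_word: "imod 3 (eval_word ws) \<in> D3_coset ((expA ws - expB ws) mod 3)"
proof (induction ws)
  case Nil
  then show ?case by (simp add: D3_coset_def D3_def imod_def ione_def)
next
  case (Cons l ws)
  obtain isA pos where l: "l = (isA, pos)" by (cases l)
  define j where "j = (expA ws - expB ws) mod 3"
  have "j = 0 \<or> j = 1 \<or> j = 2" unfolding j_def by presburger
  then have "imod 3 (imul (gen l) (imod 3 (eval_word ws))) \<in> D3_coset ((j + expA [l] - expB [l]) mod 3)"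
    using Cons.IH by (intro imod_3_gen_D3_coset) (auto simp: j_def)
  moreover have "(j + expA [l] - expB [l]) mod 3 = (expA (l # ws) - expB (l # ws)) mod 3"
    unfolding j_def l by (cases isA; cases pos; simp; presburger)
  moreover have "imod 3 (eval_word (l # ws)) = imod 3 (imul (gen l) (imod 3 (eval_word ws)))"
    using imod_imul[of 3 "gen l" "eval_word ws"] imod_imul[of 3 "gen l" "imod 3 (eval_word ws)"] by simp
  ultimately show ?case by simp
qed

lemma imod_3_eval_word_D3: "3 dvd expA ws \<Longrightarrow> 3 dvd expB ws \<Longrightarrow> imod 3 (eval_word ws) \<in> D3"
  using imod_3_eval_word[of ws] by (simp add: D3_coset_def mod_eq_0_iff_dvd)

definition comm_AB :: "(bool \<times> bool) list" where
  "comm_AB = [(True, True), (False, True), (True, False), (False, False)]"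

text \<open>Words with vanishing exponent sums whose residues represent the four elements of
  \<open>D\<^sub>3\<close>.\<close>

definition D3_reps :: "(bool \<times> bool) list set" where
  "D3_reps = {[], comm_AB, [(True, True)] @ comm_AB @ [(True, False)], comm_AB @ [(True, True)] @ comm_AB @ [(True, False)]}"

lemma D3_reps_exp: "ws \<in> D3_reps \<Longrightarrow> expA ws = 0 \<and> expB ws = 0"
  by (auto simp: D3_reps_def comm_AB_def)

lemma D3_reps_cover:
  assumes "v \<in> D3"
  shows "\<exists>ws \<in> D3_reps. imod 3 (imul v (iadj (eval_word ws))) = ione \<or>
                      imod 3 (imul (ineg v) (iadj (eval_word ws))) = ione"
proof -
  have "eval_word comm_AB = (21, -8, 8, -3)"
    "eval_word ([(True, True)] @ comm_AB @ [(True, False)]) = (37, -88, 8, -19)"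
    "eval_word (comm_AB @ [(True, True)] @ comm_AB @ [(True, False)]) = (713, -1696, 272, -647)"
    by (simp_all add: comm_AB_def gen_def imul_def ione_def)
  then have "\<forall>v \<in> D3. \<exists>ws \<in> D3_reps. imod 3 (imul v (iadj (eval_word ws))) = ione \<or>
                                   imod 3 (imul (ineg v) (iadj (eval_word ws))) = ione"
    unfolding D3_reps_def by (simp add: D3_def imul_def ione_def imod_def iadj_def ineg_def)
  then show ?thesis using assms by blast
qed

lemma Phi_mod_D3:
  assumes "odd m" "3 dvd m" "[idet T = 1] (mod m)" "imod 3 T \<in> D3"
  shows "Phi_mod N m T \<or> Phi_mod N m (ineg T)"
proof -
  have coset: "Phi_mod N m S"
    if "[idet S = 1] (mod m)" "ws \<in> D3_reps" "imod 3 (imul S (iadj (eval_word ws))) = ione" for S ws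
  proof -
    have "mat_cong 3 (imul S (iadj (eval_word ws))) ione"
      using that(3) by (simp add: mat_cong_iff_imod ione_def imod_def)
    moreover have "[idet (imul S (iadj (eval_word ws))) = 1] (mod m)"
      using that(1) by (simp add: idet_imul idet_eval_word)
    ultimately have "Phi_mod N m (imul S (iadj (eval_word ws)))" by (rule Phi_mod_level_3[OF assms(1,2)])
    moreover have "Phi_mod N m (eval_word ws)"
      using D3_reps_exp[OF that(2)] by (simp add: Phi_mod_zero_exponents)
    ultimately have "Phi_mod N m (imul (imul S (iadj (eval_word ws))) (eval_word ws))" by (rule Phi_mod_imul)
    then show ?thesis by (simp add: imul_assoc imul_iadj_cancel idet_eval_word)
  qed
  have "imod 3 (imul (imod 3 T) Y) = imod 3 (imul T Y)"
       "imod 3 (imul (ineg (imod 3 T)) Y) = imod 3 (imul (ineg T) Y)" for Y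
    by (metis imod_imul imod_imod, metis imod_imul imod_ineg)
  moreover have "[idet (ineg T) = 1] (mod m)" using assms(3) by (cases T) (simp add: idet_def ineg_def)
  ultimately show ?thesis using D3_reps_cover[OF assms(4)] coset assms(3) by metis
qed

section \<open>The profinite topology\<close>

lemma zodd_dvd: "x \<in> zodd \<Longrightarrow> odd n \<Longrightarrow> k dvd n \<Longrightarrow> x k = x n mod int k"
  by (simp add: zodd_def)

lemma zodd_mod_self: "x \<in> zodd \<Longrightarrow> odd n \<Longrightarrow> x n mod int n = x n"
  by (simp add: zodd_def)

lemma zodd_even: "x \<in> zodd \<Longrightarrow> even n \<Longrightarrow> x n = 0"
  by (simp add: zodd_def)

definition zmat_res :: "nat \<Rightarrow> zmat \<Rightarrow> imat" where
  "zmat_res n M = (case M of (a, b, c, d) \<Rightarrow> (a n, b n, c n, d n))"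

lemma red3_eq_zmat_res: "red3 = zmat_res 3"
  by (simp add: fun_eq_iff red3_def zmat_res_def)

lemma zmat_res_dvd:
  assumes "M \<in> SL2_odd" "odd n" "k dvd n"
  shows "zmat_res k M = imod (int k) (zmat_res n M)"
proof -
  obtain a b c d where M: "M = (a, b, c, d)" by (cases M)
  then have "a \<in> zodd" "b \<in> zodd" "c \<in> zodd" "d \<in> zodd" using assms(1) by (simp_all add: SL2_odd_def)
  then show ?thesis using zodd_dvd[OF _ assms(2,3)] by (simp add: M zmat_res_def imod_def)
qed

lemma zmat_res_eq_dvd:
  assumes "M \<in> SL2_odd" "M' \<in> SL2_odd" "odd n" "k dvd n" "zmat_res n M = zmat_res n M'"
  shows "zmat_res k M = zmat_res k M'"
  using zmat_res_dvd[OF assms(1,3,4)] zmat_res_dvd[OF assms(2,3,4)] assms(5) by simp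

lemma imod_zmat_res: "M \<in> SL2_odd \<Longrightarrow> odd n \<Longrightarrow> imod (int n) (zmat_res n M) = zmat_res n M"
  by (cases M) (simp add: SL2_odd_def zmat_res_def imod_def zodd_mod_self)

lemma idet_zmat_res:
  assumes "M \<in> SL2_odd" "odd n"
  shows "[idet (zmat_res n M) = 1] (mod int n)"
proof -
  obtain a b c d where M: "M = (a, b, c, d)" by (cases M)
  then have "zsub (zmul a d) (zmul b c) n = zint 1 n" using assms(1) by (simp add: SL2_odd_def)
  then show ?thesis
    using assms(2) by (simp add: M zmat_res_def idet_def zsub_def zmul_def zint_def cong_def mod_diff_eq)
qed

lemma zneg_odd: "odd n \<Longrightarrow> zneg x n = (- x n) mod int n"
  by (simp add: zneg_def zsub_def zint_def)

lemma zneg_even: "even n \<Longrightarrow> zneg x n = 0"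
  by (simp add: zneg_def zsub_def)

lemma zneg_zodd:
  assumes "x \<in> zodd"
  shows "zneg x \<in> zodd"
  unfolding zodd_def
proof (intro CollectI conjI allI impI)
  fix m :: nat assume "odd m"
  then show "0 \<le> zneg x m" "zneg x m < int m" using odd_pos[of m] by (simp_all add: zneg_odd)
next
  fix m :: nat assume "even m" then show "zneg x m = 0" by (rule zneg_even)
next
  fix m n :: nat assume "odd n \<and> m dvd n"
  moreover from this have "odd m" using dvd_trans by blast
  ultimately show "zneg x m = zneg x n mod int m"
    using zodd_dvd[OF assms, of n m] by (simp add: zneg_odd mod_minus_eq mod_mod_cancel)
qed

lemma zneg_zneg:
  assumes "x \<in> zodd"
  shows "zneg (zneg x) = x"
proof
  fix m :: nat
  show "zneg (zneg x) m = x m"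
  proof (cases "odd m")
    case True
    then show ?thesis using zodd_mod_self[OF assms True] by (simp add: zneg_odd mod_minus_eq)
  next
    case False
    then show ?thesis using zodd_even[OF assms] by (simp add: zneg_even)
  qed
qed

lemma zint_neg: "zint (- k) = zneg (zint k)"
  by (rule ext) (simp add: zint_def zneg_odd zneg_even mod_minus_eq)

lemma zint_zodd: "zint k \<in> zodd"
  unfolding zodd_def
proof (intro CollectI conjI allI impI)
  fix m :: nat assume "odd m"
  then show "0 \<le> zint k m" "zint k m < int m" using odd_pos[of m] by (simp_all add: zint_def)
next
  fix m n :: nat assume "odd n \<and> m dvd n"
  moreover from this have "odd m" using dvd_trans by blast
  ultimately show "zint k m = zint k n mod int m" by (simp add: zint_def mod_mod_cancel)
qed (simp add: zint_def)

lemma zsub_zmul_zneg: "zsub (zmul (zneg a) (zneg d)) (zmul (zneg b) (zneg c)) = zsub (zmul a d) (zmul b c)"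
proof
  fix m :: nat
  have "((- x) mod int m * ((- y) mod int m)) mod int m = (x * y) mod int m" for x y
    by (metis mod_mult_eq minus_mult_minus)
  then show "zsub (zmul (zneg a) (zneg d)) (zmul (zneg b) (zneg c)) m = zsub (zmul a d) (zmul b c) m"
    by (cases "odd m") (simp_all add: zsub_def zmul_def zneg_odd)
qed

lemma mneg_SL2: "M \<in> SL2_odd \<Longrightarrow> mneg M \<in> SL2_odd"
  by (cases M) (simp add: SL2_odd_def mneg_def zneg_zodd zsub_zmul_zneg)

lemma mneg_mneg: "M \<in> SL2_odd \<Longrightarrow> mneg (mneg M) = M"
  by (cases M) (simp add: SL2_odd_def mneg_def zneg_zneg)

lemma PSL2_odd_elem:
  assumes "P \<in> PSL2_odd" "M \<in> P"
  shows "M \<in> SL2_odd" "P = pcls M" "mneg M \<in> P"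
proof -
  obtain X where X: "X \<in> SL2_odd" "P = pcls X" using assms(1) by (auto simp: PSL2_odd_def)
  then have "M = X \<or> M = mneg X" using assms(2) by (simp add: pcls_def)
  moreover have "mneg X \<in> SL2_odd" "mneg (mneg X) = X" using X(1) by (simp_all add: mneg_SL2 mneg_mneg)
  ultimately show "M \<in> SL2_odd" "P = pcls M" "mneg M \<in> P"
    using X by (auto simp: pcls_def)
qed

lemma zmat_res_mneg: "odd n \<Longrightarrow> zmat_res n (mneg M) = imod (int n) (ineg (zmat_res n M))"
  by (cases M) (simp add: zmat_res_def mneg_def imod_def ineg_def zneg_odd)

lemma zmat_res_mneg_cong:
  "odd n \<Longrightarrow> zmat_res n M = zmat_res n M' \<Longrightarrow> zmat_res n (mneg M) = zmat_res n (mneg M')"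
  by (simp add: zmat_res_mneg)

lemma zmat_res_emb: "odd n \<Longrightarrow> zmat_res n (emb E) = imod (int n) E"
  by (cases E) (simp add: zmat_res_def emb_def imod_def zint_def)

lemma emb_ineg: "emb (ineg E) = mneg (emb E)"
  by (cases E) (simp add: emb_def ineg_def mneg_def zint_neg)

lemma emb_SL2:
  assumes "idet E = 1"
  shows "emb E \<in> SL2_odd"
proof -
  obtain a b c d where E: "E = (a, b, c, d)" by (cases E)
  have "zsub (zmul (zint a) (zint d)) (zmul (zint b) (zint c)) = zint (a * d - b * c)"
  proof
    fix m :: nat
    show "zsub (zmul (zint a) (zint d)) (zmul (zint b) (zint c)) m = zint (a * d - b * c) m"
      by (cases "odd m") (simp_all add: zsub_def zmul_def zint_def mod_mult_eq mod_diff_eq)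
  qed
  also have "\<dots> = zint 1" using assms by (simp add: E idet_def)
  finally show ?thesis by (simp add: E emb_def SL2_odd_def zint_zodd)
qed

lemma psl_embed_ipcls: "psl_embed (ipcls E) = pcls (emb E)"
  by (simp add: psl_embed_def ipcls_def pcls_def emb_ineg)

lemma topspace_SL2_top: "topspace SL2_top = SL2_odd"
  by (auto simp: SL2_top_def zodd_top_def SL2_odd_def)

lemma openin_PSL2_top:
  "openin PSL2_top U \<longleftrightarrow> U \<subseteq> PSL2_odd \<and> openin SL2_top {M \<in> SL2_odd. pcls M \<in> U}"
proof -
  have Int: "{M \<in> SL2_odd. pcls M \<in> S \<inter> T} = {M \<in> SL2_odd. pcls M \<in> S} \<inter> {M \<in> SL2_odd. pcls M \<in> T}"
    for S T by auto
  have Union: "{M \<in> SL2_odd. pcls M \<in> \<Union>K} = \<Union>((\<lambda>U. {M \<in> SL2_odd. pcls M \<in> U}) ` K)"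
    for K by auto
  have "istopology (\<lambda>U. U \<subseteq> PSL2_odd \<and> openin SL2_top {M \<in> SL2_odd. pcls M \<in> U})"
    unfolding istopology_def Int Union by (auto intro!: openin_Int openin_Union)
  then show ?thesis unfolding PSL2_top_def by simp
qed

lemma topspace_PSL2_top: "topspace PSL2_top = PSL2_odd"
proof
  have "{M \<in> SL2_odd. pcls M \<in> PSL2_odd} = topspace SL2_top"
    by (auto simp: topspace_SL2_top PSL2_odd_def)
  then have "openin PSL2_top PSL2_odd" unfolding openin_PSL2_top by simp
  then show "PSL2_odd \<subseteq> topspace PSL2_top" by (rule openin_subset)
  show "topspace PSL2_top \<subseteq> PSL2_odd" using openin_topspace[of PSL2_top] unfolding openin_PSL2_top by blast
qed

lemma zodd_top_nbhd:
  assumes "openin zodd_top W" "x0 \<in> W"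
  shows "\<exists>n. odd n \<and> (\<forall>x \<in> zodd. x n = x0 n \<longrightarrow> x \<in> W)"
proof -
  obtain T where T: "openin (product_topology (\<lambda>_. discrete_topology (UNIV :: int set)) UNIV) T"
    and W: "W = T \<inter> zodd"
    using assms(1) unfolding zodd_top_def openin_subtopology by blast
  have x0: "x0 \<in> T" "x0 \<in> zodd" using assms(2) W by auto
  obtain U where fin: "finite {i \<in> UNIV. U i \<noteq> topspace (discrete_topology (UNIV :: int set))}"
    and x0U: "x0 \<in> Pi\<^sub>E UNIV U" and UT: "Pi\<^sub>E UNIV U \<subseteq> T"
    using T x0(1) unfolding openin_product_topology_alt by blast
  define n where "n = \<Prod>{i. U i \<noteq> UNIV \<and> odd i}"
  have fin': "finite {i. U i \<noteq> UNIV \<and> odd i}" using fin by simp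
  have "odd n" unfolding n_def using even_prod_iff[OF fin', of id] by auto
  have "x \<in> W" if x: "x \<in> zodd" "x n = x0 n" for x
  proof -
    have "x i \<in> U i" for i
    proof (cases "U i = UNIV")
      case False
      have "x i = x0 i"
      proof (cases "odd i")
        case True
        with False have "i \<in> {i. U i \<noteq> UNIV \<and> odd i}" by simp
        then have "i dvd n" unfolding n_def using dvd_prodI[OF fin', of i "\<lambda>x. x"] by simp
        then show ?thesis using zodd_dvd[OF x(1) \<open>odd n\<close>] zodd_dvd[OF x0(2) \<open>odd n\<close>] x(2) by metis
      next
        case False
        then show ?thesis using zodd_even[OF x(1)] zodd_even[OF x0(2)] by simp
      qed
      then show ?thesis using x0U by (auto simp: PiE_iff)
    qed simp
    then have "x \<in> Pi\<^sub>E UNIV U" by (simp add: PiE_iff)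
    then show ?thesis using UT W x(1) by blast
  qed
  then show ?thesis using \<open>odd n\<close> by blast
qed

lemma SL2_top_nbhd:
  assumes "openin SL2_top V" "M0 \<in> V"
  shows "\<exists>n. odd n \<and> (\<forall>M \<in> SL2_odd. zmat_res n M = zmat_res n M0 \<longrightarrow> M \<in> V)"
proof -
  obtain T where T: "openin (prod_topology zodd_top (prod_topology zodd_top (prod_topology zodd_top zodd_top))) T"
    and V: "V = T \<inter> SL2_odd"
    using assms(1) unfolding SL2_top_def openin_subtopology by blast
  obtain a b c d where M0: "M0 = (a, b, c, d)" by (cases M0)
  have M0_SL2: "M0 \<in> SL2_odd" and "(a, b, c, d) \<in> T" using assms(2) V M0 by blast+
  obtain U1 V1 where U1: "openin zodd_top U1" "a \<in> U1" and "(b, c, d) \<in> V1" "U1 \<times> V1 \<subseteq> T"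
    and V1: "openin (prod_topology zodd_top (prod_topology zodd_top zodd_top)) V1"
    using openin_prod_topology_alt[THEN iffD1, rule_format, OF T \<open>(a, b, c, d) \<in> T\<close>] by (elim exE conjE)
  obtain U2 V2 where U2: "openin zodd_top U2" "b \<in> U2" and "(c, d) \<in> V2" "U2 \<times> V2 \<subseteq> V1"
    and V2: "openin (prod_topology zodd_top zodd_top) V2"
    using openin_prod_topology_alt[THEN iffD1, rule_format, OF V1 \<open>(b, c, d) \<in> V1\<close>] by (elim exE conjE)
  obtain U3 U4 where U3: "openin zodd_top U3" "c \<in> U3" and U4: "openin zodd_top U4" "d \<in> U4"
    and "U3 \<times> U4 \<subseteq> V2"
    using openin_prod_topology_alt[THEN iffD1, rule_format, OF V2 \<open>(c, d) \<in> V2\<close>] by (elim exE conjE)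
  obtain n1 where n1: "odd n1" "\<forall>x \<in> zodd. x n1 = a n1 \<longrightarrow> x \<in> U1" using zodd_top_nbhd[OF U1] by blast
  obtain n2 where n2: "odd n2" "\<forall>x \<in> zodd. x n2 = b n2 \<longrightarrow> x \<in> U2" using zodd_top_nbhd[OF U2] by blast
  obtain n3 where n3: "odd n3" "\<forall>x \<in> zodd. x n3 = c n3 \<longrightarrow> x \<in> U3" using zodd_top_nbhd[OF U3] by blast
  obtain n4 where n4: "odd n4" "\<forall>x \<in> zodd. x n4 = d n4 \<longrightarrow> x \<in> U4" using zodd_top_nbhd[OF U4] by blast
  define n where "n = n1 * n2 * n3 * n4"
  have "odd n" using n1 n2 n3 n4 by (simp add: n_def)
  have "M \<in> V" if M: "M \<in> SL2_odd" "zmat_res n M = zmat_res n M0" for M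
  proof -
    obtain a' b' c' d' where M': "M = (a', b', c', d')" by (cases M)
    have "zmat_res k M = zmat_res k M0" if "k \<in> {n1, n2, n3, n4}" for k
      using zmat_res_eq_dvd[OF M(1) M0_SL2 \<open>odd n\<close> _ M(2)] that by (auto simp: n_def)
    then have "a' n1 = a n1" "b' n2 = b n2" "c' n3 = c n3" "d' n4 = d n4"
      by (simp_all add: M' M0 zmat_res_def)
    moreover have "a' \<in> zodd" "b' \<in> zodd" "c' \<in> zodd" "d' \<in> zodd" using M(1) by (simp_all add: M' SL2_odd_def)
    ultimately have "a' \<in> U1" "b' \<in> U2" "c' \<in> U3" "d' \<in> U4" using n1 n2 n3 n4 by blast+
    then have "(c', d') \<in> V2" using \<open>U3 \<times> U4 \<subseteq> V2\<close> by blast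
    then have "(b', c', d') \<in> V1" using \<open>b' \<in> U2\<close> \<open>U2 \<times> V2 \<subseteq> V1\<close> by blast
    then have "M \<in> T" using \<open>a' \<in> U1\<close> \<open>U1 \<times> V1 \<subseteq> T\<close> unfolding M' by blast
    then show ?thesis using M(1) V by blast
  qed
  with \<open>odd n\<close> show ?thesis by (intro exI[of _ n]) simp
qed

lemma openin_SL2_top_zmat_res_fibre: "openin SL2_top {M \<in> SL2_odd. zmat_res n M = X}"
proof -
  obtain x1 x2 x3 x4 where X: "X = (x1, x2, x3, x4)" by (cases X)
  define C where "C v = {x \<in> zodd. x n = v}" for v
  have "openin zodd_top (C v)" for v
  proof -
    have "openin (product_topology (\<lambda>_. discrete_topology (UNIV :: int set)) UNIV)
        {x \<in> topspace (product_topology (\<lambda>_. discrete_topology (UNIV :: int set)) UNIV). x n \<in> {v}}"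
      by (rule openin_continuous_map_preimage[OF continuous_map_product_projection]) auto
    then show ?thesis unfolding C_def zodd_top_def openin_subtopology by auto
  qed
  then have "openin (prod_topology zodd_top (prod_topology zodd_top (prod_topology zodd_top zodd_top)))
      (C x1 \<times> C x2 \<times> C x3 \<times> C x4)"
    by (simp add: openin_prod_Times_iff)
  moreover have "{M \<in> SL2_odd. zmat_res n M = X} = (C x1 \<times> C x2 \<times> C x3 \<times> C x4) \<inter> SL2_odd"
    by (auto simp: C_def X zmat_res_def SL2_odd_def)
  ultimately show ?thesis unfolding SL2_top_def openin_subtopology by blast
qed

lemma openin_PSL2_top_pcls_image:
  assumes "openin SL2_top C" "\<And>M. M \<in> C \<Longrightarrow> mneg M \<in> C"
  shows "openin PSL2_top (pcls ` C)"
proof -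
  have "C \<subseteq> SL2_odd" using openin_subset[OF assms(1)] by (simp add: topspace_SL2_top)
  moreover have "M \<in> C" if "pcls M = pcls M'" "M' \<in> C" for M M'
  proof -
    have "M = M' \<or> M = mneg M'" using that(1) by (auto simp: pcls_def doubleton_eq_iff)
    then show ?thesis using that(2) assms(2) by blast
  qed
  ultimately have "{M \<in> SL2_odd. pcls M \<in> pcls ` C} = C" by blast
  with assms(1) \<open>C \<subseteq> SL2_odd\<close> show ?thesis unfolding openin_PSL2_top by (auto simp: PSL2_odd_def)
qed

lemma closure_of_PSL2_approx:
  assumes "P \<in> PSL2_top closure_of S" "odd n"
  shows "\<exists>M \<in> P. \<exists>Q \<in> S. \<exists>M' \<in> Q. zmat_res n M = zmat_res n M'"
proof -
  have P: "P \<in> PSL2_odd" and meets: "\<And>U. P \<in> U \<Longrightarrow> openin PSL2_top U \<Longrightarrow> \<exists>Q \<in> S. Q \<in> U"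
    using assms(1) unfolding closure_of_def topspace_PSL2_top by blast+
  then obtain M0 where M0: "M0 \<in> SL2_odd" "P = pcls M0" by (auto simp: PSL2_odd_def)
  define C where "C = {M \<in> SL2_odd. zmat_res n M = zmat_res n M0} \<union> {M \<in> SL2_odd. zmat_res n M = zmat_res n (mneg M0)}"
  have "mneg M \<in> C" if "M \<in> C" for M
  proof -
    from that consider "M \<in> SL2_odd" "zmat_res n M = zmat_res n M0"
      | "M \<in> SL2_odd" "zmat_res n M = zmat_res n (mneg M0)"
      unfolding C_def by blast
    then show ?thesis
    proof cases
      case 1
      then show ?thesis using zmat_res_mneg_cong[OF assms(2) 1(2)] mneg_SL2 by (simp add: C_def)
    next
      case 2
      then show ?thesis
        using zmat_res_mneg_cong[OF assms(2) 2(2)] mneg_SL2 mneg_mneg[OF M0(1)] by (simp add: C_def)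
    qed
  qed
  then have "openin PSL2_top (pcls ` C)"
    unfolding C_def by (intro openin_PSL2_top_pcls_image openin_Un openin_SL2_top_zmat_res_fibre)
  moreover have "P \<in> pcls ` C" using M0 by (auto simp: C_def)
  ultimately obtain M' where "M' \<in> C" "pcls M' \<in> S" using meets by blast
  moreover have "M' \<in> pcls M'" "M0 \<in> P" "mneg M0 \<in> P" by (simp_all add: M0 pcls_def)
  ultimately show ?thesis unfolding C_def by (metis (mono_tags, lifting) Un_iff mem_Collect_eq)
qed

lemma in_closure_of_PSL2_if_approx:
  assumes "S \<subseteq> PSL2_odd" "P \<in> PSL2_odd"
    and approx: "\<And>n. odd n \<Longrightarrow> \<exists>M \<in> P. \<exists>Q \<in> S. \<exists>M' \<in> Q. zmat_res n M = zmat_res n M'"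
  shows "P \<in> PSL2_top closure_of S"
proof -
  obtain M0 where M0: "M0 \<in> SL2_odd" "P = pcls M0" using assms(2) by (auto simp: PSL2_odd_def)
  have "\<exists>Q \<in> S. Q \<in> U" if U: "P \<in> U" "openin PSL2_top U" for U
  proof -
    define V where "V = {M \<in> SL2_odd. pcls M \<in> U}"
    have "mneg M0 \<in> P" using M0(2) by (simp add: pcls_def)
    then have "P = pcls (mneg M0)" by (rule PSL2_odd_elem(2)[OF assms(2)])
    then have "mneg M0 \<in> V" using U(1) mneg_SL2[OF M0(1)] by (simp add: V_def)
    moreover have "M0 \<in> V" using M0 U(1) by (simp add: V_def)
    moreover have "openin SL2_top V" using U(2) by (simp add: openin_PSL2_top V_def)
    ultimately obtain n1 n2 where n: "odd n1" "odd n2"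
      and V1: "\<forall>M \<in> SL2_odd. zmat_res n1 M = zmat_res n1 M0 \<longrightarrow> M \<in> V"
      and V2: "\<forall>M \<in> SL2_odd. zmat_res n2 M = zmat_res n2 (mneg M0) \<longrightarrow> M \<in> V"
      using SL2_top_nbhd by meson
    moreover have "odd (n1 * n2)" using n by simp
    ultimately obtain M Q M' where "M \<in> P" "Q \<in> S" "M' \<in> Q"
      and eq: "zmat_res (n1 * n2) M = zmat_res (n1 * n2) M'"
      using approx[OF \<open>odd (n1 * n2)\<close>] by blast
    moreover have M'_SL2: "M' \<in> SL2_odd" "Q = pcls M'"
      using PSL2_odd_elem[of Q M'] assms(1) \<open>Q \<in> S\<close> \<open>M' \<in> Q\<close> by auto
    moreover have "M = M0 \<or> M = mneg M0" using \<open>M \<in> P\<close> M0(2) by (simp add: pcls_def)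
    ultimately have "M' \<in> V"
      using zmat_res_eq_dvd[OF M'_SL2(1) _ _ _ eq[symmetric]] V1 V2 M0(1) mneg_SL2[OF M0(1)] n by auto
    then show ?thesis using \<open>Q \<in> S\<close> M'_SL2(2) by (auto simp: V_def)
  qed
  then show ?thesis unfolding closure_of_def topspace_PSL2_top using assms(2) by blast
qed

lemma psl_embed_Phi_subset: "psl_embed ` Phi N \<subseteq> PSL2_odd"
  by (auto simp: Phi_def psl_embed_ipcls PSL2_odd_def intro!: imageI emb_SL2 idet_eval_word)

lemma in_psl_embed_Phi_iff:
  "Q \<in> psl_embed ` Phi N \<longleftrightarrow>
     (\<exists>ws. int N dvd expA ws \<and> int N dvd expB ws \<and> Q = pcls (emb (eval_word ws)))"
proof
  assume "Q \<in> psl_embed ` Phi N"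
  then show "\<exists>ws. int N dvd expA ws \<and> int N dvd expB ws \<and> Q = pcls (emb (eval_word ws))"
    by (auto simp: Phi_def psl_embed_ipcls)
next
  assume "\<exists>ws. int N dvd expA ws \<and> int N dvd expB ws \<and> Q = pcls (emb (eval_word ws))"
  then obtain ws where "int N dvd expA ws" "int N dvd expB ws" "Q = psl_embed (ipcls (eval_word ws))"
    by (auto simp: psl_embed_ipcls)
  then show "Q \<in> psl_embed ` Phi N" by (auto simp: Phi_def)
qed

lemma zmat_res_eq_zmat_res_emb_iff:
  "M \<in> SL2_odd \<Longrightarrow> odd n \<Longrightarrow>
    zmat_res n M = zmat_res n (emb E) \<longleftrightarrow> mat_cong (int n) E (zmat_res n M)"
  by (auto simp: zmat_res_emb mat_cong_iff_imod imod_zmat_res)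

lemma approx_by_Phi_iff:
  assumes P: "P \<in> PSL2_odd" and "odd n"
  shows "(\<exists>M \<in> P. \<exists>Q \<in> psl_embed ` Phi N. \<exists>M' \<in> Q. zmat_res n M = zmat_res n M') \<longleftrightarrow>
         (\<exists>M \<in> P. Phi_mod N (int n) (zmat_res n M))"
proof
  assume "\<exists>M \<in> P. \<exists>Q \<in> psl_embed ` Phi N. \<exists>M' \<in> Q. zmat_res n M = zmat_res n M'"
  then obtain M Q M' where M: "M \<in> P" and "Q \<in> psl_embed ` Phi N" "M' \<in> Q" "zmat_res n M = zmat_res n M'"
    by blast
  then obtain ws where ws: "int N dvd expA ws" "int N dvd expB ws"
    and M': "M' \<in> pcls (emb (eval_word ws))" "zmat_res n M = zmat_res n M'"
    unfolding in_psl_embed_Phi_iff by blast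
  let ?E = "emb (eval_word ws)"
  have "?E \<in> SL2_odd" by (simp add: emb_SL2 idet_eval_word)
  have "M' = ?E \<or> M' = mneg ?E" using M'(1) by (simp add: pcls_def)
  then have "zmat_res n M = zmat_res n ?E \<or> zmat_res n (mneg M) = zmat_res n ?E"
  proof
    assume "M' = mneg ?E"
    then have "zmat_res n (mneg M) = zmat_res n (mneg (mneg ?E))" using zmat_res_mneg_cong[OF \<open>odd n\<close> M'(2)] by simp
    then show ?thesis using mneg_mneg[OF \<open>?E \<in> SL2_odd\<close>] by simp
  qed (use M'(2) in simp)
  then obtain M0 where "M0 \<in> P" "zmat_res n M0 = zmat_res n ?E"
    using M PSL2_odd_elem(3)[OF P M] by blast
  then have "mat_cong (int n) (eval_word ws) (zmat_res n M0)"
    using zmat_res_eq_zmat_res_emb_iff PSL2_odd_elem(1)[OF P] \<open>odd n\<close> by blast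
  then show "\<exists>M \<in> P. Phi_mod N (int n) (zmat_res n M)"
    using \<open>M0 \<in> P\<close> ws unfolding Phi_mod_def by blast
next
  assume "\<exists>M \<in> P. Phi_mod N (int n) (zmat_res n M)"
  then obtain M ws where M: "M \<in> P" and ws: "int N dvd expA ws" "int N dvd expB ws"
    and cong: "mat_cong (int n) (eval_word ws) (zmat_res n M)"
    unfolding Phi_mod_def by blast
  then have "zmat_res n M = zmat_res n (emb (eval_word ws))"
    using zmat_res_eq_zmat_res_emb_iff PSL2_odd_elem(1)[OF P M] \<open>odd n\<close> by blast
  moreover have "pcls (emb (eval_word ws)) \<in> psl_embed ` Phi N"
    using ws unfolding in_psl_embed_Phi_iff by blast
  ultimately show "\<exists>M \<in> P. \<exists>Q \<in> psl_embed ` Phi N. \<exists>M' \<in> Q. zmat_res n M = zmat_res n M'"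
    using M by (auto simp: pcls_def)
qed

lemma in_closure_Phi_iff:
  "P \<in> PSL2_top closure_of (psl_embed ` Phi N) \<longleftrightarrow>
     P \<in> PSL2_odd \<and> (\<forall>n. odd n \<longrightarrow> (\<exists>M \<in> P. Phi_mod N (int n) (zmat_res n M)))"
proof
  assume P: "P \<in> PSL2_top closure_of (psl_embed ` Phi N)"
  then have P': "P \<in> PSL2_odd" using closure_of_subset_topspace[of PSL2_top] topspace_PSL2_top by blast
  have "\<exists>M \<in> P. Phi_mod N (int n) (zmat_res n M)" if "odd n" for n
    using approx_by_Phi_iff[OF P' that] closure_of_PSL2_approx[OF P that] by blast
  with P' show "P \<in> PSL2_odd \<and> (\<forall>n. odd n \<longrightarrow> (\<exists>M \<in> P. Phi_mod N (int n) (zmat_res n M)))"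
    by blast
next
  assume "P \<in> PSL2_odd \<and> (\<forall>n. odd n \<longrightarrow> (\<exists>M \<in> P. Phi_mod N (int n) (zmat_res n M)))"
  then have P: "P \<in> PSL2_odd" and approx: "\<And>n. odd n \<Longrightarrow> \<exists>M \<in> P. Phi_mod N (int n) (zmat_res n M)"
    by blast+
  show "P \<in> PSL2_top closure_of (psl_embed ` Phi N)"
  proof (rule in_closure_of_PSL2_if_approx[OF psl_embed_Phi_subset P])
    fix n :: nat assume "odd n"
    then show "\<exists>M \<in> P. \<exists>Q \<in> psl_embed ` Phi N. \<exists>M' \<in> Q. zmat_res n M = zmat_res n M'"
      using approx_by_Phi_iff[OF P \<open>odd n\<close>] approx[OF \<open>odd n\<close>] by blast
  qed
qed

lemma Phi_mod_zmat_res_dvd: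
  assumes "M \<in> SL2_odd" "odd n'" "n dvd n'"
  shows "Phi_mod N (int n') (zmat_res n' M) \<Longrightarrow> Phi_mod N (int n) (zmat_res n M)"
    and "Phi_mod N (int n') (ineg (zmat_res n' M)) \<Longrightarrow> Phi_mod N (int n) (zmat_res n (mneg M))"
proof -
  have n: "odd n" "int n dvd int n'" using assms(2,3) dvd_trans by auto
  have eq: "zmat_res n M = imod (int n) (zmat_res n' M)" by (rule zmat_res_dvd[OF assms])
  show "Phi_mod N (int n) (zmat_res n M)" if "Phi_mod N (int n') (zmat_res n' M)"
    using Phi_mod_cong[OF Phi_mod_dvd[OF that n(2)] mat_cong_imod] unfolding eq .
  have "zmat_res n (mneg M) = imod (int n) (ineg (zmat_res n' M))"
    using imod_ineg by (simp add: zmat_res_mneg[OF n(1)] eq)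
  then show "Phi_mod N (int n) (zmat_res n (mneg M))" if "Phi_mod N (int n') (ineg (zmat_res n' M))"
    using Phi_mod_cong[OF Phi_mod_dvd[OF that n(2)] mat_cong_imod] by simp
qed

lemma closure_Phi_not_3_dvd:
  assumes "\<not> 3 dvd N"
  shows "PSL2_top closure_of (psl_embed ` Phi N) = PSL2_odd"
proof
  show "PSL2_top closure_of (psl_embed ` Phi N) \<subseteq> PSL2_odd"
    using closure_of_subset_topspace[of PSL2_top] by (simp add: topspace_PSL2_top)
  show "PSL2_odd \<subseteq> PSL2_top closure_of (psl_embed ` Phi N)"
  proof
    fix P assume P: "P \<in> PSL2_odd"
    then obtain M where "M \<in> P" by (auto simp: PSL2_odd_def pcls_def)
    have "Phi_mod N (int n) (zmat_res n M)" if "odd n" for n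
      using that assms idet_zmat_res[OF PSL2_odd_elem(1)[OF P \<open>M \<in> P\<close>] that]
      by (intro Phi_mod_not_3_dvd) simp_all
    then have "\<forall>n. odd n \<longrightarrow> (\<exists>M \<in> P. Phi_mod N (int n) (zmat_res n M))" using \<open>M \<in> P\<close> by blast
    then show "P \<in> PSL2_top closure_of (psl_embed ` Phi N)" by (simp add: in_closure_Phi_iff P)
  qed
qed

lemma closure_Phi_subset_Dhat:
  assumes "3 dvd N"
  shows "PSL2_top closure_of (psl_embed ` Phi N) \<subseteq> Dhat_odd"
proof
  fix P assume "P \<in> PSL2_top closure_of (psl_embed ` Phi N)"
  then have "P \<in> PSL2_odd" "\<forall>n. odd n \<longrightarrow> (\<exists>M \<in> P. Phi_mod N (int n) (zmat_res n M))"
    by (simp_all add: in_closure_Phi_iff)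
  moreover have "odd (3 :: nat)" by simp
  ultimately obtain M where P: "P \<in> PSL2_odd" "M \<in> P" and "Phi_mod N (int 3) (zmat_res 3 M)" by blast
  then obtain ws where ws: "int N dvd expA ws" "int N dvd expB ws" "mat_cong 3 (eval_word ws) (zmat_res 3 M)"
    unfolding Phi_mod_def by auto
  have "3 dvd int N" using assms by presburger
  then have "imod 3 (eval_word ws) \<in> D3"
    using dvd_trans[OF _ ws(1)] dvd_trans[OF _ ws(2)] by (intro imod_3_eval_word_D3)
  moreover have "imod 3 (eval_word ws) = red3 M"
    using ws(3) imod_zmat_res[OF PSL2_odd_elem(1)[OF P], of 3] by (simp add: mat_cong_iff_imod red3_eq_zmat_res)
  ultimately show "P \<in> Dhat_odd" using P by (auto simp: Dhat_odd_def)
qed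

lemma Dhat_subset_closure_Phi: "Dhat_odd \<subseteq> PSL2_top closure_of (psl_embed ` Phi N)"
proof
  fix P assume "P \<in> Dhat_odd"
  then obtain M where P: "P \<in> PSL2_odd" "M \<in> P" and "red3 M \<in> D3" by (auto simp: Dhat_odd_def)
  have M: "M \<in> SL2_odd" "mneg M \<in> P" using PSL2_odd_elem[OF P] by auto
  have "\<exists>M \<in> P. Phi_mod N (int n) (zmat_res n M)" if "odd n" for n
  proof -
    have "odd (3 * n)" using that by simp
    moreover have "imod 3 (zmat_res (3 * n) M) \<in> D3"
      using \<open>red3 M \<in> D3\<close> zmat_res_dvd[OF M(1) \<open>odd (3 * n)\<close>, of 3] by (simp add: red3_eq_zmat_res)
    ultimately have "Phi_mod N (int (3 * n)) (zmat_res (3 * n) M) \<or> Phi_mod N (int (3 * n)) (ineg (zmat_res (3 * n) M))"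
      using idet_zmat_res[OF M(1) \<open>odd (3 * n)\<close>] by (intro Phi_mod_D3) simp_all
    then show ?thesis
      using Phi_mod_zmat_res_dvd[OF M(1) \<open>odd (3 * n)\<close>, of n] P(2) M(2) by auto
  qed
  then show "P \<in> PSL2_top closure_of (psl_embed ` Phi N)"
    using in_closure_Phi_iff P(1) by blast
qed

theorem proposition14:
  fixes N :: nat
  assumes "N \<ge> 1"
  shows "PSL2_top closure_of (psl_embed ` Phi N) =
           (if 3 dvd N then Dhat_odd else PSL2_odd)"
proof (cases "3 dvd N")
  case True
  then show ?thesis using closure_Phi_subset_Dhat Dhat_subset_closure_Phi by (simp add: subset_antisym)
next
  case False
  then show ?thesis using closure_Phi_not_3_dvd by simp
qed

end
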